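(* Let $n\ge 4$, $Q=\{0,1,\dots,n-1\}$, and let $\mathcal{W}_n=(Q,\{a,b,c,d,e\},\delta,0,\{1\})$ be the DFA whose letters induce the following transformations of $Q$: $a$: $0\mapsto n-1$, $i\mapsto i+1$ for $1\le i\le n-3$, $n-2\mapsto 1$, $n-1\mapsto n-1$; $b$: $0\mapsto n-1$, $1\mapsto 2$, $2\mapsto 1$, all other states fixed; $c$: $0\mapsto n-1$, $n-2\mapsto 1$, all other states fixed; $d$: $0\mapsto n-1$, $1\mapsto n-1$, all other states fixed; $e$: $0\mapsto 1$, every state $q\neq 0$ mapped to $n-1$. Then $\mathcal{W}_n$ is minimal, the language it accepts is suffix-free, and its transition semigroup equals $\mathbf{W}_{\mathrm{sf}}(n)$, which has cardinality $(n-1)^{n-2}+n-2$. In particular, $\mathbf{W}_{\mathrm{sf}}(n)$ contains (a) all $(n-1)^{n-2}$ transformations of $Q$ that send $0$ and $n-1$ to $n-1$ and map $\{1,\dots,n-2\}$ into $Q\setminus\{0\}$, and (b) all $n-2$ transformations that send $0$ to a state in $\{1,\dots,n-2\}$ and map all other states to $n-1$.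
   Context: Transformations act on the right: $qt$ is the image of $q$ under $t$, and $st$ denotes applying $s$ first, then $t$. The transition semigroup of a DFA is the semigroup of transformations of its state set generated by the transformations induced by its letters. A language $L$ is suffix-free if whenever $w\in L$ and $u\in L$ with $u$ a suffix of $w$, then $u=w$. Define $\mathbf{B}_{\mathrm{sf}}(n)=\{t:Q\to Q \mid 0\notin Qt,\ (n-1)t=n-1,\ \text{and for all } j\ge1:\ 0t^j=n-1 \text{ or } 0t^j\neq qt^j \text{ for all } q \text{ with } 0<q<n-1\}$, and $\mathbf{W}_{\mathrm{sf}}(n)=\{t\in\mathbf{B}_{\mathrm{sf}}(n)\mid 0t=n-1 \text{ or } qt=n-1 \text{ for all } q \text{ with } 1\le q\le n-2\}$. *)

theory Defs
  imports "HOL-Library.FuncSet"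
begin

datatype letter = La | Lb | Lc | Ld | Le

definition trQ :: "nat \<Rightarrow> (nat \<Rightarrow> nat) set" where
  "trQ n = {..<n} \<rightarrow>\<^sub>E {..<n}"

text \<open>Composition acting on the right: st = apply s first, then t.\<close>
definition tcomp :: "nat \<Rightarrow> (nat \<Rightarrow> nat) \<Rightarrow> (nat \<Rightarrow> nat) \<Rightarrow> (nat \<Rightarrow> nat)" where
  "tcomp n s t = restrict (\<lambda>q. t (s q)) {..<n}"

inductive_set gen_semigroup :: "nat \<Rightarrow> (nat \<Rightarrow> nat) set \<Rightarrow> (nat \<Rightarrow> nat) set"
  for n G where
  gen: "t \<in> G \<Longrightarrow> t \<in> gen_semigroup n G"
| comp: "s \<in> gen_semigroup n G \<Longrightarrow> t \<in> gen_semigroup n G \<Longrightarrow> tcomp n s t \<in> gen_semigroup n G"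

definition lang_of :: "(nat \<Rightarrow> letter \<Rightarrow> nat) \<Rightarrow> nat \<Rightarrow> nat set \<Rightarrow> letter list set" where
  "lang_of \<delta> q0 F = {w. foldl \<delta> q0 w \<in> F}"

definition is_dfa :: "nat set \<Rightarrow> (nat \<Rightarrow> letter \<Rightarrow> nat) \<Rightarrow> nat \<Rightarrow> nat set \<Rightarrow> bool" where
  "is_dfa S \<delta> q0 F \<longleftrightarrow> finite S \<and> q0 \<in> S \<and> F \<subseteq> S \<and> (\<forall>q\<in>S. \<forall>x. \<delta> q x \<in> S)"

definition minimal_dfa :: "nat set \<Rightarrow> (nat \<Rightarrow> letter \<Rightarrow> nat) \<Rightarrow> nat \<Rightarrow> nat set \<Rightarrow> bool" where
  "minimal_dfa S \<delta> q0 F \<longleftrightarrow> is_dfa S \<delta> q0 F \<and>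
     (\<forall>S' \<delta>' q0' F'. is_dfa S' \<delta>' q0' F' \<and> lang_of \<delta>' q0' F' = lang_of \<delta> q0 F
        \<longrightarrow> card S \<le> card S')"

definition suffix_free :: "'a list set \<Rightarrow> bool" where
  "suffix_free L \<longleftrightarrow> (\<forall>w\<in>L. \<forall>u\<in>L. (\<exists>v. w = v @ u) \<longrightarrow> u = w)"

definition B_sf :: "nat \<Rightarrow> (nat \<Rightarrow> nat) set" where
  "B_sf n = {t \<in> trQ n. 0 \<notin> t ` {..<n} \<and> t (n-1) = n-1 \<and>
     (\<forall>j\<ge>1. (t ^^ j) 0 = n-1 \<or> (\<forall>q. 0 < q \<and> q < n-1 \<longrightarrow> (t ^^ j) 0 \<noteq> (t ^^ j) q))}"

definition W_sf :: "nat \<Rightarrow> (nat \<Rightarrow> nat) set" where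
  "W_sf n = {t \<in> B_sf n. t 0 = n-1 \<or> (\<forall>q. 1 \<le> q \<and> q \<le> n-2 \<longrightarrow> t q = n-1)}"

definition W_letter :: "nat \<Rightarrow> letter \<Rightarrow> nat \<Rightarrow> nat" where
  "W_letter n x = restrict (case x of
      La \<Rightarrow> (\<lambda>q. if q = 0 then n-1 else if 1 \<le> q \<and> q \<le> n-3 then q+1
                 else if q = n-2 then 1 else q)
    | Lb \<Rightarrow> (\<lambda>q. if q = 0 then n-1 else if q = 1 then 2 else if q = 2 then 1 else q)
    | Lc \<Rightarrow> (\<lambda>q. if q = 0 then n-1 else if q = n-2 then 1 else q)
    | Ld \<Rightarrow> (\<lambda>q. if q = 0 then n-1 else if q = 1 then n-1 else q)
    | Le \<Rightarrow> (\<lambda>q. if q = 0 then 1 else n-1)) {..<n}"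

definition W_delta :: "nat \<Rightarrow> nat \<Rightarrow> letter \<Rightarrow> nat" where
  "W_delta n q x = W_letter n x q"

end

theory Submission
  imports Defs "HOL-Combinatorics.Transposition"
begin

(* Every transformation in W_sf(n) either sends 0 to the sink n-1 and the other states into
   Q - {0} (kind (a)), or sends 0 into the middle states {1,...,n-2} and everything else to the
   sink (kind (b)). Both kinds together are closed under composition and contain the letters,
   which bounds the transition semigroup from above and gives the count. Conversely, a and b
   generate all permutations of the middle states, conjugates of c and d change a single point
   arbitrarily, and these maps produce every map of kind (a) by induction on the number of moved
   middle states; e followed by a power of a gives every map of kind (b). In the automaton every
   state is reached and any two are separated by e or a power of a, so it is minimal; it is
   suffix-free because the initial state is never re-entered and each letter kills either the
   run from the initial state or the runs from all other states. *)

section \<open>Two kinds of transformations\<close>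

lemma tcomp_apply: "tcomp n s t x = (if x < n then t (s x) else undefined)"
  by (simp add: tcomp_def)

lemma trQ_memI:
  "(\<And>x. x < n \<Longrightarrow> f x < n) \<Longrightarrow> (\<And>x. \<not> x < n \<Longrightarrow> f x = undefined) \<Longrightarrow> f \<in> trQ n"
  by (auto simp: trQ_def PiE_def extensional_def Pi_def)

lemma trQ_memD:
  "f \<in> trQ n \<Longrightarrow> x < n \<Longrightarrow> f x < n"
  "f \<in> trQ n \<Longrightarrow> \<not> x < n \<Longrightarrow> f x = undefined"
  by (auto simp: trQ_def PiE_def extensional_def Pi_def)

lemma tcomp_in_trQ: "s \<in> trQ n \<Longrightarrow> t \<in> trQ n \<Longrightarrow> tcomp n s t \<in> trQ n"
  by (rule trQ_memI) (auto simp: tcomp_apply trQ_memD)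

lemma gen_semigroup_subset:
  assumes "G \<subseteq> S" and "\<And>s t. s \<in> S \<Longrightarrow> t \<in> S \<Longrightarrow> tcomp n s t \<in> S"
  shows "gen_semigroup n G \<subseteq> S"
proof
  fix t assume "t \<in> gen_semigroup n G"
  then show "t \<in> S" by induction (use assms in auto)
qed

definition W_sf_a :: "nat \<Rightarrow> (nat \<Rightarrow> nat) set" where
  "W_sf_a n = {t \<in> trQ n. t 0 = n-1 \<and> t (n-1) = n-1 \<and> (\<forall>q. 1 \<le> q \<and> q \<le> n-2 \<longrightarrow> t q \<noteq> 0)}"

definition W_sf_b :: "nat \<Rightarrow> (nat \<Rightarrow> nat) set" where
  "W_sf_b n = {t \<in> trQ n. 1 \<le> t 0 \<and> t 0 \<le> n-2 \<and> (\<forall>q. 1 \<le> q \<and> q \<le> n-1 \<longrightarrow> t q = n-1)}"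

lemma W_sf_aD:
  assumes "t \<in> W_sf_a n"
  shows "t \<in> trQ n" "t 0 = n-1" "t (n-1) = n-1" "\<And>q. 0 < q \<Longrightarrow> q < n \<Longrightarrow> t q \<noteq> 0"
proof -
  show "t \<in> trQ n" "t 0 = n-1" "t (n-1) = n-1" using assms by (auto simp: W_sf_a_def)
  fix q assume "0 < q" "q < n"
  then show "t q \<noteq> 0" using assms by (cases "q = n-1") (auto simp: W_sf_a_def)
qed

lemma W_sf_bD:
  assumes "t \<in> W_sf_b n"
  shows "t \<in> trQ n" "1 \<le> t 0" "t 0 \<le> n-2" "\<And>q. 0 < q \<Longrightarrow> q < n \<Longrightarrow> t q = n-1"
  using assms by (auto simp: W_sf_b_def)

lemma W_sf_a_Un_b_sink: "t \<in> W_sf_a n \<union> W_sf_b n \<Longrightarrow> 2 \<le> n \<Longrightarrow> t (n-1) = n-1"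
  using W_sf_aD(3) W_sf_bD(4)[of t n "n-1"] by auto

lemma W_sf_a_Un_b_nonzero:
  assumes "t \<in> W_sf_a n \<union> W_sf_b n" "2 \<le> n" "x < n"
  shows "t x \<noteq> 0"
  using assms W_sf_aD[of t n] W_sf_bD[of t n] by (cases "x = 0") auto

lemma W_sf_a_Int_b: "2 \<le> n \<Longrightarrow> W_sf_a n \<inter> W_sf_b n = {}"
  by (auto simp: W_sf_a_def W_sf_b_def)

lemma funpow_fixed_point: "t p = p \<Longrightarrow> (t ^^ k) p = p"
  by (induction k) auto

lemma W_sf_eq_Un:
  assumes "2 \<le> n"
  shows "W_sf n = W_sf_a n \<union> W_sf_b n"
proof
  show "W_sf n \<subseteq> W_sf_a n \<union> W_sf_b n"
  proof
    fix t assume t: "t \<in> W_sf n"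
    then have tT: "t \<in> trQ n" and nz: "\<And>x. x < n \<Longrightarrow> t x \<noteq> 0" and tz: "t (n-1) = n-1"
      by (auto simp: W_sf_def B_sf_def image_iff)
    show "t \<in> W_sf_a n \<union> W_sf_b n"
    proof (cases "t 0 = n-1")
      case True
      then show ?thesis using tT tz nz assms by (auto simp: W_sf_a_def)
    next
      case False
      then have "t q = n-1" if "1 \<le> q" "q \<le> n-1" for q
        using t tz that by (cases "q = n-1") (auto simp: W_sf_def)
      moreover have "1 \<le> t 0" "t 0 \<le> n-2"
        using trQ_memD(1)[OF tT, of 0] nz[of 0] False assms by auto
      ultimately show ?thesis using tT by (auto simp: W_sf_b_def)
    qed
  qed
next
  show "W_sf_a n \<union> W_sf_b n \<subseteq> W_sf n"
  proof
    fix t assume t: "t \<in> W_sf_a n \<union> W_sf_b n"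
    have sink: "t (n-1) = n-1" using W_sf_a_Un_b_sink t assms .
    have "t (t 0) = n-1" using t sink assms W_sf_bD[of t n] by (auto simp: W_sf_a_def)
    then have "(t ^^ Suc (Suc k)) 0 = n-1" for k
      using funpow_fixed_point[of t "n-1", OF sink] by (simp add: funpow_Suc_right del: funpow.simps)
    moreover have "t 0 = n-1 \<or> (\<forall>q. 0 < q \<and> q < n-1 \<longrightarrow> t 0 \<noteq> t q)"
      using t assms by (auto simp: W_sf_a_def W_sf_b_def)
    ultimately have "(t ^^ j) 0 = n-1 \<or> (\<forall>q. 0 < q \<and> q < n-1 \<longrightarrow> (t ^^ j) 0 \<noteq> (t ^^ j) q)"
      if "1 \<le> j" for j
      using that by (cases j; cases "j - 1") auto
    moreover have "t \<in> trQ n" "t 0 = n-1 \<or> (\<forall>q. 1 \<le> q \<and> q \<le> n-2 \<longrightarrow> t q = n-1)"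
      using t assms by (auto simp: W_sf_a_def W_sf_b_def)
    ultimately show "t \<in> W_sf n"
      using sink W_sf_a_Un_b_nonzero[OF t assms] by (simp add: W_sf_def B_sf_def image_iff)
  qed
qed

lemma W_sf_a_Un_b_tcomp_closed:
  assumes s: "s \<in> W_sf_a n \<union> W_sf_b n" and t: "t \<in> W_sf_a n \<union> W_sf_b n" and n: "2 \<le> n"
  shows "tcomp n s t \<in> W_sf_a n \<union> W_sf_b n"
proof -
  have sT: "s \<in> trQ n" and tT: "t \<in> trQ n" using s t by (auto simp: W_sf_a_def W_sf_b_def)
  have st: "tcomp n s t \<in> trQ n" using tcomp_in_trQ[OF sT tT] .
  have t_sink: "t (n-1) = n-1" using W_sf_a_Un_b_sink[OF t n] .
  have t_nz: "t x \<noteq> 0" if "x < n" for x using W_sf_a_Un_b_nonzero[OF t n that] .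
  have t_lt: "t x < n" if "x < n" for x using trQ_memD(1)[OF tT that] .
  show ?thesis
  proof (cases "s \<in> W_sf_a n")
    case True
    then have "tcomp n s t \<in> W_sf_a n"
      using st n t_sink t_nz W_sf_aD[OF True] trQ_memD(1)[OF sT]
      by (auto simp: W_sf_a_def tcomp_apply)
    then show ?thesis ..
  next
    case False
    then have sB: "s \<in> W_sf_b n" using s by simp
    txt \<open>A map of the second kind followed by anything depends only on where 0 lands.\<close>
    have rest: "tcomp n s t q = n-1" if "0 < q" "q < n" for q
      using W_sf_bD(4)[OF sB that] that t_sink by (simp add: tcomp_apply)
    have at0: "tcomp n s t 0 = t (s 0)" using n by (simp add: tcomp_apply)
    have "0 < t (s 0)" "t (s 0) < n" using W_sf_bD(2,3)[OF sB] n t_nz t_lt by auto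
    then show ?thesis
      using st rest at0 n by (cases "t (s 0) = n-1") (auto simp: W_sf_a_def W_sf_b_def)
  qed
qed

lemma W_letter_in_W_sf_a_Un_b:
  assumes "4 \<le> n"
  shows "W_letter n x \<in> W_sf_a n \<union> W_sf_b n"
proof (cases "x = Le")
  case True
  then have "W_letter n x \<in> W_sf_b n"
    using assms by (auto intro!: trQ_memI simp: W_sf_b_def W_letter_def)
  then show ?thesis ..
next
  case False
  then have "W_letter n x \<in> W_sf_a n"
    using assms by (cases x) (auto intro!: trQ_memI simp: W_sf_a_def W_letter_def)
  then show ?thesis ..
qed

lemma gen_semigroup_W_letter_subset: "4 \<le> n \<Longrightarrow> gen_semigroup n (range (W_letter n)) \<subseteq> W_sf n"
  using gen_semigroup_subset[of "range (W_letter n)" "W_sf_a n \<union> W_sf_b n" n]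
    W_letter_in_W_sf_a_Un_b W_sf_a_Un_b_tcomp_closed W_sf_eq_Un[of n]
  by auto

definition sink_extension :: "nat \<Rightarrow> (nat \<Rightarrow> nat) \<Rightarrow> nat \<Rightarrow> nat" where
  "sink_extension n g = restrict (\<lambda>x. if x \<in> {1..n-2} then g x else n-1) {..<n}"

lemma W_sf_a_eq_image_sink_extension:
  assumes n: "2 \<le> n"
  shows "W_sf_a n = sink_extension n ` ({1..n-2} \<rightarrow>\<^sub>E {1..n-1})"
proof
  show "W_sf_a n \<subseteq> sink_extension n ` ({1..n-2} \<rightarrow>\<^sub>E {1..n-1})"
  proof
    fix f assume f: "f \<in> W_sf_a n"
    have "f = sink_extension n (restrict f {1..n-2})"
    proof
      fix x show "f x = sink_extension n (restrict f {1..n-2}) x"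
        using W_sf_aD[OF f] trQ_memD(2)[OF W_sf_aD(1)[OF f], of x]
        by (cases "x = 0 \<or> x = n-1") (auto simp: sink_extension_def)
    qed
    moreover have "f x \<in> {1..n-1}" if "x \<in> {1..n-2}" for x
    proof -
      have "0 < x" "x < n" using that n by auto
      then have "f x \<noteq> 0" "f x < n" using W_sf_aD(4)[OF f] trQ_memD(1)[OF W_sf_aD(1)[OF f]] by auto
      then show ?thesis by auto
    qed
    then have "restrict f {1..n-2} \<in> {1..n-2} \<rightarrow>\<^sub>E {1..n-1}" by simp
    ultimately show "f \<in> sink_extension n ` ({1..n-2} \<rightarrow>\<^sub>E {1..n-1})" by blast
  qed
next
  show "sink_extension n ` ({1..n-2} \<rightarrow>\<^sub>E {1..n-1}) \<subseteq> W_sf_a n"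
  proof
    fix f assume "f \<in> sink_extension n ` ({1..n-2} \<rightarrow>\<^sub>E {1..n-1})"
    then obtain g where g_PiE: "g \<in> {1..n-2} \<rightarrow>\<^sub>E {1..n-1}" and f: "f = sink_extension n g" by blast
    have g: "0 < g x" "g x < n" if "x \<in> {1..n-2}" for x
      using PiE_mem[OF g_PiE that] n by auto
    have "f \<in> trQ n" using g n unfolding f by (intro trQ_memI) (auto simp: sink_extension_def)
    moreover have "f 0 = n-1" "f (n-1) = n-1" using n by (auto simp: f sink_extension_def)
    moreover have "f q \<noteq> 0" if "1 \<le> q" "q \<le> n-2" for q
      using g[of q] that n by (auto simp: f sink_extension_def)
    ultimately show "f \<in> W_sf_a n" by (simp add: W_sf_a_def)
  qed
qed

lemma inj_on_sink_extension: "2 \<le> n \<Longrightarrow> inj_on (sink_extension n) ({1..n-2} \<rightarrow>\<^sub>E B)"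
proof (rule inj_onI)
  fix g h assume n: "2 \<le> n" and g: "g \<in> {1..n-2} \<rightarrow>\<^sub>E B" and h: "h \<in> {1..n-2} \<rightarrow>\<^sub>E B"
    and eq: "sink_extension n g = sink_extension n h"
  show "g = h"
  proof (rule extensionalityI)
    show "g \<in> extensional {1..n-2}" "h \<in> extensional {1..n-2}" using g h by (auto simp: PiE_def)
  next
    fix x assume x: "x \<in> {1..n-2}"
    then have "x < n" using n by auto
    then show "g x = h x" using fun_cong[OF eq, of x] x by (simp add: sink_extension_def)
  qed
qed

lemma card_W_sf_a:
  assumes "2 \<le> n"
  shows "card (W_sf_a n) = (n-1)^(n-2)"
  using W_sf_a_eq_image_sink_extension[OF assms] inj_on_sink_extension[OF assms]
  by (simp add: card_image card_PiE)

lemma card_W_sf_b: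
  assumes n: "2 \<le> n"
  shows "card (W_sf_b n) = n-2"
proof -
  define const_after where "const_after p = restrict (\<lambda>x. if x = 0 then p else n-1) {..<n}" for p :: nat
  have "W_sf_b n = const_after ` {1..n-2}"
  proof
    show "W_sf_b n \<subseteq> const_after ` {1..n-2}"
    proof
      fix t assume t: "t \<in> W_sf_b n"
      have "t = const_after (t 0)"
      proof
        fix x show "t x = const_after (t 0) x"
          using W_sf_bD[OF t] trQ_memD(2)[OF W_sf_bD(1)[OF t], of x] by (auto simp: const_after_def)
      qed
      then show "t \<in> const_after ` {1..n-2}" using W_sf_bD(2,3)[OF t] by auto
    qed
  next
    show "const_after ` {1..n-2} \<subseteq> W_sf_b n"
      using n by (auto intro!: trQ_memI simp: W_sf_b_def const_after_def)
  qed
  moreover have "inj_on const_after {1..n-2}"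
  proof (rule inj_onI)
    fix p q assume "const_after p = const_after q"
    then have "const_after p 0 = const_after q 0" by simp
    then show "p = q" using n by (simp add: const_after_def)
  qed
  ultimately show ?thesis by (simp add: card_image)
qed

lemma finite_trQ: "finite (trQ n)"
  by (simp add: trQ_def finite_PiE)

lemma card_W_sf:
  assumes "2 \<le> n"
  shows "card (W_sf n) = (n-1)^(n-2) + n - 2"
proof -
  have "finite (W_sf_a n)" "finite (W_sf_b n)"
    by (rule finite_subset[OF _ finite_trQ], auto simp: W_sf_a_def W_sf_b_def)+
  then have "card (W_sf n) = card (W_sf_a n) + card (W_sf_b n)"
    using W_sf_eq_Un[OF assms] W_sf_a_Int_b[OF assms] by (simp add: card_Un_disjoint)
  then show ?thesis using card_W_sf_a[OF assms] card_W_sf_b[OF assms] assms by simp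
qed

section \<open>Generating the semigroup\<close>

abbreviation W_semigroup :: "nat \<Rightarrow> (nat \<Rightarrow> nat) set" where
  "W_semigroup n \<equiv> gen_semigroup n (range (W_letter n))"

definition zero_to_sink :: "nat \<Rightarrow> (nat \<Rightarrow> nat) \<Rightarrow> nat \<Rightarrow> nat" where
  "zero_to_sink n g = restrict (\<lambda>x. if x = 0 then n-1 else g x) {..<n}"

lemma tcomp_zero_to_sink:
  assumes "g \<in> {0<..<n} \<rightarrow> {0<..<n}" "h (n-1) = n-1"
  shows "tcomp n (zero_to_sink n g) (zero_to_sink n h) = zero_to_sink n (h \<circ> g)"
proof
  fix x
  have "0 < g x" "g x < n" if "0 < x" "x < n" using assms(1) that by auto
  then show "tcomp n (zero_to_sink n g) (zero_to_sink n h) x = zero_to_sink n (h \<circ> g) x"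
    using assms(2) by (auto simp: tcomp_apply zero_to_sink_def)
qed

lemma zero_to_sink_cong:
  "(\<And>x. 0 < x \<Longrightarrow> x < n \<Longrightarrow> g x = h x) \<Longrightarrow> zero_to_sink n g = zero_to_sink n h"
  by (auto simp: zero_to_sink_def fun_eq_iff)

lemma zero_to_sink_comp_in_W_semigroup:
  assumes "zero_to_sink n g \<in> W_semigroup n" "zero_to_sink n h \<in> W_semigroup n"
    and "g \<in> {0<..<n} \<rightarrow> {0<..<n}" "h (n-1) = n-1"
  shows "zero_to_sink n (h \<circ> g) \<in> W_semigroup n"
  using gen_semigroup.comp[OF assms(1,2)] tcomp_zero_to_sink[of g n h] assms(3,4) by simp

lemma zero_to_sink_conj_in_W_semigroup:
  assumes "zero_to_sink n f \<in> W_semigroup n" "zero_to_sink n h \<in> W_semigroup n"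
    "zero_to_sink n g \<in> W_semigroup n"
    and "g \<in> {0<..<n} \<rightarrow> {0<..<n}" "h \<in> {0<..<n} \<rightarrow> {0<..<n}" "h (n-1) = n-1" "f (n-1) = n-1"
  shows "zero_to_sink n (f \<circ> h \<circ> g) \<in> W_semigroup n"
proof -
  have "zero_to_sink n (h \<circ> g) \<in> W_semigroup n"
    using assms by (intro zero_to_sink_comp_in_W_semigroup)
  moreover have "h \<circ> g \<in> {0<..<n} \<rightarrow> {0<..<n}" using assms(4,5) by auto
  ultimately show ?thesis using zero_to_sink_comp_in_W_semigroup assms(1,7) by (simp add: comp_assoc)
qed

lemma transpose_in_funcset: "a \<in> A \<Longrightarrow> b \<in> A \<Longrightarrow> transpose a b \<in> A \<rightarrow> A"
  by (auto simp: transpose_def)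

lemma conj_transpose:
  assumes "\<And>x. f (g x) = x" "\<And>x. g (f x) = x"
  shows "f \<circ> transpose a b \<circ> g = transpose (f a) (f b)"
  using assms by (auto simp: fun_eq_iff transpose_def)

lemma conj_fun_upd_id:
  assumes "\<And>x. f (g x) = x" "\<And>x. g (f x) = x"
  shows "f \<circ> id(q := r) \<circ> g = id(f q := f r)"
  using assms by (auto simp: fun_eq_iff)

definition cycle_shift :: "nat \<Rightarrow> nat \<Rightarrow> nat \<Rightarrow> nat" where
  "cycle_shift n k x = (if x \<in> {1..n-2} then (x - 1 + k) mod (n-2) + 1 else x)"

lemma cycle_shift_outside: "x \<notin> {1..n-2} \<Longrightarrow> cycle_shift n k x = x"
  unfolding cycle_shift_def by (rule if_not_P)

lemma cycle_shift_sink: "2 \<le> n \<Longrightarrow> cycle_shift n k (n-1) = n-1"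
  by (rule cycle_shift_outside) auto

lemma cycle_shift_add:
  assumes "3 \<le> n"
  shows "cycle_shift n j \<circ> cycle_shift n k = cycle_shift n (j + k)"
proof
  fix x
  show "(cycle_shift n j \<circ> cycle_shift n k) x = cycle_shift n (j + k) x"
  proof (cases "x \<in> {1..n-2}")
    case True
    then obtain y where x: "x = Suc y" by (cases x) auto
    define r where "r = (y + k) mod (n-2)"
    have "r < n-2" using assms by (simp add: r_def)
    then have "cycle_shift n j (Suc r) = (r + j) mod (n-2) + 1" by (simp add: cycle_shift_def)
    also have "\<dots> = (y + (j + k)) mod (n-2) + 1"
      unfolding r_def mod_add_left_eq by (simp add: ac_simps)
    finally show ?thesis using True by (simp add: cycle_shift_def x r_def)
  qed (simp add: cycle_shift_outside)
qed

lemma cycle_shift_eq_id: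
  assumes "k = 0 \<or> k = n-2"
  shows "cycle_shift n k = id"
proof
  fix x
  show "cycle_shift n k x = id x"
  proof (cases "x \<in> {1..n-2}")
    case True
    then obtain y where x: "x = Suc y" by (cases x) auto
    have "(y + k) mod (n-2) = y mod (n-2)" using assms by auto
    then show ?thesis using True by (simp add: cycle_shift_def x)
  qed (simp add: cycle_shift_outside)
qed

lemma cycle_shift_one: "1 \<le> i \<Longrightarrow> i < n-2 \<Longrightarrow> cycle_shift n 1 i = i + 1"
  by (simp add: cycle_shift_def)

lemma cycle_shift_from_one: "p \<in> {1..n-2} \<Longrightarrow> cycle_shift n (p - 1) 1 = p"
  by (auto simp: cycle_shift_def)

lemma cycle_shift_in_funcset: "cycle_shift n k \<in> {0<..<n} \<rightarrow> {0<..<n}"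
proof
  fix x assume x: "x \<in> {0<..<n}"
  show "cycle_shift n k x \<in> {0<..<n}"
  proof (cases "x \<in> {1..n-2}")
    case True
    then have "(x - 1 + k) mod (n-2) < n-2" by (intro mod_less_divisor) auto
    then show ?thesis using True by (simp add: cycle_shift_def)
  qed (use x in \<open>simp add: cycle_shift_outside\<close>)
qed

definition moved :: "nat \<Rightarrow> (nat \<Rightarrow> nat) \<Rightarrow> nat set" where
  "moved n g = {x \<in> {1..n-2}. g x \<noteq> x}"

lemma finite_moved: "finite (moved n g)"
  by (rule finite_subset[of _ "{1..n-2}"]) (auto simp: moved_def)

lemma moved_fun_upd_self: "moved n (g(y := y)) = moved n g - {y}"
  by (auto simp: moved_def)

lemma moved_transpose_comp_subset:
  assumes bij: "bij_betw g {1..n-2} {1..n-2}" and q: "q \<in> moved n g"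
  shows "moved n (transpose q (g q) \<circ> g) \<subseteq> moved n g - {q}"
proof
  fix x assume x: "x \<in> moved n (transpose q (g q) \<circ> g)"
  have "x \<noteq> q" using x by (auto simp: moved_def)
  moreover have "g x \<noteq> x"
  proof
    assume gx: "g x = x"
    then have "x \<noteq> g q"
      using q x bij by (auto simp: moved_def bij_betw_def dest: inj_onD)
    then show False using x gx \<open>x \<noteq> q\<close> by (simp add: moved_def)
  qed
  ultimately show "x \<in> moved n g - {q}" using x by (simp add: moved_def)
qed

lemma bij_betw_if_surj_on_finite: "finite A \<Longrightarrow> A \<subseteq> f ` A \<Longrightarrow> bij_betw f A A"
  by (metis bij_betw_def card_image card_subset_eq finite_imageI finite_surj_inj)

context
  fixes n :: nat
  assumes n: "4 \<le> n"
begin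

lemma W_letter_eq_zero_to_sink:
  "W_letter n La = zero_to_sink n (cycle_shift n 1)"
  "W_letter n Lb = zero_to_sink n (transpose 1 2)"
  "W_letter n Lc = zero_to_sink n (id(n-2 := 1))"
  "W_letter n Ld = zero_to_sink n (id(1 := n-1))"
  using n by (auto simp: W_letter_def zero_to_sink_def cycle_shift_def transpose_def fun_eq_iff)

lemma zero_to_sink_in_W_semigroup_letter:
  "zero_to_sink n (cycle_shift n 1) \<in> W_semigroup n"
  "zero_to_sink n (transpose 1 2) \<in> W_semigroup n"
  "zero_to_sink n (id(n-2 := 1)) \<in> W_semigroup n"
  "zero_to_sink n (id(1 := n-1)) \<in> W_semigroup n"
  unfolding W_letter_eq_zero_to_sink[symmetric] by (auto intro: gen_semigroup.gen)

lemma cycle_shift_in_W_semigroup: "zero_to_sink n (cycle_shift n k) \<in> W_semigroup n"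
proof -
  have Suc: "zero_to_sink n (cycle_shift n (Suc k)) \<in> W_semigroup n" for k
  proof (induction k)
    case (Suc k)
    have "zero_to_sink n (cycle_shift n 1 \<circ> cycle_shift n (Suc k)) \<in> W_semigroup n"
      using n by (intro zero_to_sink_comp_in_W_semigroup Suc.IH zero_to_sink_in_W_semigroup_letter(1)
          cycle_shift_in_funcset cycle_shift_sink) simp
    then show ?case using cycle_shift_add[of n 1 "Suc k"] n by simp
  qed (use zero_to_sink_in_W_semigroup_letter(1) in simp)
  have "Suc (n-3) = n-2" using n by simp
  then have "cycle_shift n 0 = cycle_shift n (Suc (n-3))"
    using cycle_shift_eq_id[of 0 n] cycle_shift_eq_id[of "n-2" n] by simp
  then show ?thesis using Suc by (cases k) simp_all
qed

lemma adjacent_transposition_in_W_semigroup: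
  "1 \<le> i \<Longrightarrow> i < n-2 \<Longrightarrow> zero_to_sink n (transpose i (i+1)) \<in> W_semigroup n"
proof (induction i rule: nat_induct_at_least)
  case base
  show ?case unfolding one_add_one by (rule zero_to_sink_in_W_semigroup_letter(2))
next
  case (Suc i)
  have "1 + (n-3) = n-2" "n-3 + 1 = n-2" using n by simp_all
  then have inverse: "cycle_shift n 1 (cycle_shift n (n-3) x) = x" "cycle_shift n (n-3) (cycle_shift n 1 x) = x" for x
    using cycle_shift_add[of n 1 "n-3"] cycle_shift_add[of n "n-3" 1] cycle_shift_eq_id[of "n-2" n] n
    by (simp_all add: fun_eq_iff del: One_nat_def)
  have "transpose (Suc i) (Suc i + 1) = cycle_shift n 1 \<circ> transpose i (i+1) \<circ> cycle_shift n (n-3)"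
    using conj_transpose[OF inverse, of i "i+1"] cycle_shift_one[of i n] cycle_shift_one[of "i+1" n] Suc
    by simp
  moreover have "zero_to_sink n (cycle_shift n 1 \<circ> transpose i (i+1) \<circ> cycle_shift n (n-3)) \<in> W_semigroup n"
    using Suc n
    by (intro zero_to_sink_conj_in_W_semigroup cycle_shift_in_W_semigroup cycle_shift_in_funcset
        transpose_in_funcset cycle_shift_sink) auto
  ultimately show ?case by (metis add.commute plus_1_eq_Suc)
qed

lemma transposition_in_W_semigroup:
  assumes "q \<in> {1..n-2}" "r \<in> {1..n-2}"
  shows "zero_to_sink n (transpose q r) \<in> W_semigroup n"
proof -
  have upward: "zero_to_sink n (transpose p (p + Suc d)) \<in> W_semigroup n"
    if "1 \<le> p" "p + Suc d \<le> n-2" for p d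
    using that
  proof (induction d)
    case 0
    then show ?case using adjacent_transposition_in_W_semigroup by simp
  next
    case (Suc d)
    define r where "r = p + Suc d"
    have "transpose p (Suc r) = transpose r (Suc r) \<circ> transpose p r \<circ> transpose r (Suc r)"
      using conj_transpose[of "transpose r (Suc r)" "transpose r (Suc r)" p r] by (simp add: r_def)
    moreover have "zero_to_sink n (transpose r (Suc r) \<circ> transpose p r \<circ> transpose r (Suc r)) \<in> W_semigroup n"
      using Suc adjacent_transposition_in_W_semigroup[of r]
      by (intro zero_to_sink_conj_in_W_semigroup transpose_in_funcset) (auto simp: r_def)
    moreover have "p + Suc (Suc d) = Suc r" by (simp add: r_def)
    ultimately show ?case by metis
  qed
  moreover have "zero_to_sink n (transpose q q) \<in> W_semigroup n"
    using cycle_shift_in_W_semigroup[of 0] cycle_shift_eq_id[of 0 n] by simp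
  ultimately show ?thesis
    using assms upward[of q] upward[of r]
    by (cases q r rule: linorder_cases) (auto simp: transpose_commute less_iff_Suc_add)
qed

lemma point_update_conj_in_W_semigroup:
  assumes "zero_to_sink n (id(q := r)) \<in> W_semigroup n"
    and "u \<in> {1..n-2}" "v \<in> {1..n-2}" "q \<noteq> n-1" "r \<in> {0<..<n}"
  shows "zero_to_sink n (id(transpose u v q := transpose u v r)) \<in> W_semigroup n"
proof -
  have "transpose u v \<circ> id(q := r) \<circ> transpose u v = id(transpose u v q := transpose u v r)"
    by (rule conj_fun_upd_id) simp_all
  moreover have "zero_to_sink n (transpose u v \<circ> id(q := r) \<circ> transpose u v) \<in> W_semigroup n"
    using assms n
    by (intro zero_to_sink_conj_in_W_semigroup transposition_in_W_semigroup transpose_in_funcset)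
      (auto simp: transpose_def)
  ultimately show ?thesis by simp
qed

lemma point_update_in_W_semigroup:
  assumes q: "q \<in> {1..n-2}" and r: "r \<in> {1..n-1}" "r \<noteq> q"
  shows "zero_to_sink n (id(q := r)) \<in> W_semigroup n"
proof (cases "r = n-1")
  case True
  txt \<open>Conjugate the letter d.\<close>
  have "zero_to_sink n (id(transpose 1 q 1 := transpose 1 q (n-1))) \<in> W_semigroup n"
    using q n by (intro point_update_conj_in_W_semigroup zero_to_sink_in_W_semigroup_letter(4)) auto
  moreover have "transpose 1 q (n-1) = n-1" using q n by (intro transpose_apply_other) auto
  ultimately show ?thesis using True by simp
next
  case False
  txt \<open>Conjugate the letter c twice, first moving its target 1 to r and then its source to q.\<close>
  define p where "p = transpose 1 r (n-2)"
  have p: "p \<in> {1..n-2}" "p \<noteq> r" using r False n by (auto simp: p_def transpose_def)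
  have "zero_to_sink n (id(transpose 1 r (n-2) := transpose 1 r 1)) \<in> W_semigroup n"
    using r False n by (intro point_update_conj_in_W_semigroup zero_to_sink_in_W_semigroup_letter(3)) auto
  then have "zero_to_sink n (id(p := r)) \<in> W_semigroup n" by (simp add: p_def)
  then have "zero_to_sink n (id(transpose p q p := transpose p q r)) \<in> W_semigroup n"
    using p q r False n by (intro point_update_conj_in_W_semigroup) auto
  then show ?thesis using p r by simp
qed

lemma zero_to_sink_in_W_semigroup:
  assumes "g \<in> {0<..<n} \<rightarrow> {0<..<n}" "g (n-1) = n-1"
  shows "zero_to_sink n g \<in> W_semigroup n"
  using assms
proof (induction "card (moved n g)" arbitrary: g rule: less_induct)
  case less
  have g: "0 < g x" "g x < n" if "0 < x" "x < n" for x using less.prems(1) that by auto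
  show ?case
  proof (cases "moved n g = {}")
    case True
    have "g x = cycle_shift n 0 x" if "0 < x" "x < n" for x
      using True that less.prems(2) cycle_shift_eq_id[of 0 n] by (cases "x = n-1") (auto simp: moved_def)
    then have "zero_to_sink n g = zero_to_sink n (cycle_shift n 0)" by (rule zero_to_sink_cong)
    then show ?thesis using cycle_shift_in_W_semigroup by simp
  next
    case False
    then obtain q where q: "q \<in> moved n g" by auto
    show ?thesis
    proof (cases "{1..n-2} \<subseteq> g ` {1..n-2}")
      case False
      txt \<open>A state y outside the image of the middle states: fix y, then send it to g y.\<close>
      then obtain y where y: "y \<in> {1..n-2}" "y \<notin> g ` {1..n-2}" by blast
      then have gy: "g y \<noteq> y" by (metis imageI)
      have "0 < g y" "g y < n" using y g n by auto
      then have update: "zero_to_sink n (id(y := g y)) \<in> W_semigroup n"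
        using y gy by (intro point_update_in_W_semigroup) auto
      define h where "h = g(y := y)"
      have "card (moved n h) < card (moved n g)"
        using y gy finite_moved unfolding h_def moved_fun_upd_self
        by (intro psubset_card_mono) (auto simp: moved_def)
      moreover have "h \<in> {0<..<n} \<rightarrow> {0<..<n}" "h (n-1) = n-1"
        using y g n less.prems(2) by (auto simp: h_def)
      ultimately have "zero_to_sink n h \<in> W_semigroup n" using less.hyps by blast
      moreover note update
      moreover have "zero_to_sink n g = zero_to_sink n (id(y := g y) \<circ> h)"
      proof (rule zero_to_sink_cong)
        fix x assume "0 < x" "x < n"
        then show "g x = (id(y := g y) \<circ> h) x"
          using y less.prems(2) n by (cases "x = n-1") (auto simp: h_def)
      qed
      moreover have "(id(y := g y)) (n-1) = n-1" using y n by auto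
      ultimately show ?thesis
        using \<open>h \<in> {0<..<n} \<rightarrow> {0<..<n}\<close> by (simp add: zero_to_sink_comp_in_W_semigroup)
    next
      case True
      txt \<open>g permutes the middle states: split off the transposition of q and g q.\<close>
      then have bij: "bij_betw g {1..n-2} {1..n-2}" by (simp add: bij_betw_if_surj_on_finite)
      define r where "r = g q"
      have "q \<in> {1..n-2}" using q by (simp add: moved_def)
      then have qr: "q \<in> {1..n-2}" "r \<in> {1..n-2}" "r \<noteq> q"
        using q bij_betw_apply[OF bij] by (auto simp: moved_def r_def)
      define h where "h = transpose q r \<circ> g"
      have "card (moved n h) < card (moved n g)"
        using moved_transpose_comp_subset[OF bij q] q finite_moved unfolding h_def r_def
        by (intro psubset_card_mono) auto
      moreover have "h \<in> {0<..<n} \<rightarrow> {0<..<n}" "h (n-1) = n-1"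
        using qr g n less.prems(2) by (auto simp: h_def transpose_def)
      ultimately have "zero_to_sink n h \<in> W_semigroup n" using less.hyps by blast
      moreover have "g = transpose q r \<circ> h" by (simp add: h_def fun_eq_iff)
      moreover have "transpose q r (n-1) = n-1" using qr n by (intro transpose_apply_other) auto
      ultimately show ?thesis
        using \<open>h \<in> {0<..<n} \<rightarrow> {0<..<n}\<close> transposition_in_W_semigroup[OF qr(1,2)]
        by (simp add: zero_to_sink_comp_in_W_semigroup)
    qed
  qed
qed

lemma W_sf_a_subset_W_semigroup: "W_sf_a n \<subseteq> W_semigroup n"
proof
  fix f assume f: "f \<in> W_sf_a n"
  have "f = zero_to_sink n f"
    using W_sf_aD[OF f] trQ_memD(2)[OF W_sf_aD(1)[OF f]] by (auto simp: zero_to_sink_def fun_eq_iff)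
  moreover have "f \<in> {0<..<n} \<rightarrow> {0<..<n}"
    using W_sf_aD(4)[OF f] trQ_memD(1)[OF W_sf_aD(1)[OF f]] by auto
  ultimately show "f \<in> W_semigroup n"
    using zero_to_sink_in_W_semigroup W_sf_aD(3)[OF f] by metis
qed

lemma W_sf_b_subset_W_semigroup: "W_sf_b n \<subseteq> W_semigroup n"
proof
  fix t assume t: "t \<in> W_sf_b n"
  txt \<open>The letter e moves 0 to 1; a rotation then carries 1 to t 0.\<close>
  have "cycle_shift n (t 0 - 1) 1 = t 0" using cycle_shift_from_one[of "t 0" n] W_sf_bD(2,3)[OF t] by simp
  then have "t = tcomp n (W_letter n Le) (zero_to_sink n (cycle_shift n (t 0 - 1)))"
    using W_sf_bD[OF t] trQ_memD(2)[OF W_sf_bD(1)[OF t]] cycle_shift_sink[of n] n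
    by (auto simp: fun_eq_iff tcomp_apply W_letter_def zero_to_sink_def)
  then show "t \<in> W_semigroup n"
    by (metis cycle_shift_in_W_semigroup gen_semigroup.comp gen_semigroup.gen rangeI)
qed

lemma W_semigroup_eq_W_sf: "W_semigroup n = W_sf n"
proof
  show "W_semigroup n \<subseteq> W_sf n" using gen_semigroup_W_letter_subset n .
  show "W_sf n \<subseteq> W_semigroup n"
    using W_sf_a_subset_W_semigroup W_sf_b_subset_W_semigroup W_sf_eq_Un[of n] n by simp
qed

end

section \<open>The automaton\<close>

lemma foldl_closed: "(\<And>q x. q \<in> S \<Longrightarrow> \<delta> q x \<in> S) \<Longrightarrow> q \<in> S \<Longrightarrow> foldl \<delta> q w \<in> S"
  by (induction w arbitrary: q) auto

lemma card_le_if_pairwise_distinguishable: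
  assumes "is_dfa S \<delta> q0 F"
    and "\<And>p p'. p \<in> P \<Longrightarrow> p' \<in> P \<Longrightarrow> p \<noteq> p' \<Longrightarrow>
      \<exists>s. (word p @ s \<in> lang_of \<delta> q0 F) \<noteq> (word p' @ s \<in> lang_of \<delta> q0 F)"
  shows "card P \<le> card S"
proof (rule card_inj_on_le)
  show "inj_on (\<lambda>p. foldl \<delta> q0 (word p)) P"
    using assms(2) by (fastforce intro: inj_onI simp: lang_of_def)
  show "(\<lambda>p. foldl \<delta> q0 (word p)) ` P \<subseteq> S"
    using assms(1) foldl_closed[of S \<delta>] by (auto simp: is_dfa_def)
  show "finite S" using assms(1) by (simp add: is_dfa_def)
qed

lemma suffix_free_if_letters_separate_initial:
  assumes dfa: "is_dfa S \<delta> q0 F"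
    and no_return: "\<And>q x. q \<in> S \<Longrightarrow> \<delta> q x \<noteq> q0"
    and dead: "\<And>x. \<delta> z x = z" "z \<notin> F" "q0 \<notin> F"
    and separate: "\<And>x. \<delta> q0 x = z \<or> (\<forall>q \<in> S - {q0}. \<delta> q x = z)"
  shows "suffix_free (lang_of \<delta> q0 F)"
  unfolding suffix_free_def
proof (intro ballI impI)
  fix w u assume w: "w \<in> lang_of \<delta> q0 F" and u: "u \<in> lang_of \<delta> q0 F" and "\<exists>v. w = v @ u"
  then obtain v where v: "w = v @ u" by blast
  have stuck: "foldl \<delta> z w' = z" for w' by (induction w') (simp_all add: dead(1))
  show "u = w"
  proof (rule ccontr)
    assume "u \<noteq> w"
    then obtain y v' where "v = y # v'" using v by (cases v) auto
    moreover have "\<delta> q x \<in> S - {q0}" if "q \<in> S" for q x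
      using dfa no_return that by (auto simp: is_dfa_def)
    ultimately have s: "foldl \<delta> q0 v \<in> S - {q0}"
      using foldl_closed[of "S - {q0}" \<delta> "\<delta> q0 y" v'] dfa by (auto simp: is_dfa_def)
    obtain x u' where u': "u = x # u'" using u dead(3) by (cases u) (auto simp: lang_of_def)
    txt \<open>The first letter of u kills either the run from q0 or the run from the state reached by v.\<close>
    show False
      using separate[of x] s u w stuck dead(2) by (auto simp: lang_of_def v u')
  qed
qed

definition access_word :: "nat \<Rightarrow> nat \<Rightarrow> letter list" where
  "access_word n p = (if p = 0 then [] else if p = n-1 then [La] else Le # replicate (p-1) La)"

definition separating_word :: "nat \<Rightarrow> nat \<Rightarrow> letter list" where
  "separating_word n p = (if p = 0 then [Le] else replicate (n-1-p) La)"

context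
  fixes n :: nat
  assumes n: "4 \<le> n"
begin

lemma is_dfa_W: "is_dfa {..<n} (W_delta n) 0 {1}"
proof -
  have "W_letter n x \<in> trQ n" for x
    using W_letter_in_W_sf_a_Un_b[OF n] by (auto simp: W_sf_a_def W_sf_b_def)
  then show ?thesis using n trQ_memD(1) by (auto simp: is_dfa_def W_delta_def)
qed

lemma W_delta_sink: "W_delta n (n-1) x = n-1"
  using W_sf_a_Un_b_sink[OF W_letter_in_W_sf_a_Un_b[OF n]] n by (simp add: W_delta_def)

lemma foldl_W_delta_sink: "foldl (W_delta n) (n-1) w = n-1"
  by (induction w) (simp_all only: foldl.simps W_delta_sink)

lemma W_delta_nonzero: "q < n \<Longrightarrow> W_delta n q x \<noteq> 0"
  using W_sf_a_Un_b_nonzero[OF W_letter_in_W_sf_a_Un_b[OF n]] n by (simp add: W_delta_def)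

lemma suffix_free_W: "suffix_free (lang_of (W_delta n) 0 {1})"
proof (rule suffix_free_if_letters_separate_initial[OF is_dfa_W])
  show "W_delta n q x \<noteq> 0" if "q \<in> {..<n}" for q x using W_delta_nonzero that by simp
  show "W_delta n (n-1) x = n-1" for x by (rule W_delta_sink)
  show "n-1 \<notin> {1::nat}" "0 \<notin> {1::nat}" using n by auto
  show "W_delta n 0 x = n-1 \<or> (\<forall>q\<in>{..<n} - {0}. W_delta n q x = n-1)" for x
    using W_letter_in_W_sf_a_Un_b[OF n, of x] W_sf_aD(2) W_sf_bD(4) by (fastforce simp: W_delta_def)
qed

lemma foldl_replicate_La:
  "0 < q \<Longrightarrow> q < n \<Longrightarrow> foldl (W_delta n) q (replicate k La) = cycle_shift n k q"
proof (induction k arbitrary: q)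
  case 0
  then show ?case using cycle_shift_eq_id[of 0 n] by simp
next
  case (Suc k)
  have "W_delta n q La = cycle_shift n 1 q"
    using Suc.prems by (simp add: W_delta_def W_letter_eq_zero_to_sink[OF n] zero_to_sink_def)
  moreover have "cycle_shift n 1 q \<in> {0<..<n}" using cycle_shift_in_funcset[of n 1] Suc.prems by auto
  ultimately show ?case
    using Suc.IH cycle_shift_add[of n k 1] n by (simp add: fun_eq_iff)
qed

lemma foldl_access_word: "p < n \<Longrightarrow> foldl (W_delta n) 0 (access_word n p) = p"
  using n foldl_replicate_La[of 1 "p-1"] cycle_shift_from_one[of p n]
  by (auto simp: access_word_def W_delta_def W_letter_def)

lemma foldl_separating_word:
  assumes q: "q < n" and p: "p < n-1"
  shows "foldl (W_delta n) q (separating_word n p) = 1 \<longleftrightarrow> q = p"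
proof (cases "p = 0")
  case True
  then show ?thesis using q n by (auto simp: separating_word_def W_delta_def W_letter_def)
next
  case False
  then have p: "p \<in> {1..n-2}" using p by auto
  have "n-1-p = Suc (n-2-p)" using p by auto
  then have word: "separating_word n p = La # replicate (n-2-p) La"
    using p by (simp add: separating_word_def)
  consider "q = 0" | "q = n-1" | "q \<in> {1..n-2}" using q by fastforce
  then show ?thesis
  proof cases
    case 1
    then show ?thesis using p n foldl_W_delta_sink by (simp add: word W_delta_def W_letter_def)
  next
    case 2
    moreover have "n-1 \<noteq> 1" "n-1 \<noteq> p" using p n by auto
    ultimately show ?thesis using foldl_W_delta_sink[of "separating_word n p"] by simp
  next
    case 3
    txt \<open>Shifting by n-1-p undoes the shift by p-1 that carries 1 to p.\<close>
    have "(p - 1) + (n-1-p) = n-2" "(n-1-p) + (p - 1) = n-2" using p by auto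
    then have inverse: "cycle_shift n (p-1) (cycle_shift n (n-1-p) x) = x"
      "cycle_shift n (n-1-p) (cycle_shift n (p-1) x) = x" for x
      using cycle_shift_add[of n "p-1" "n-1-p"] cycle_shift_add[of n "n-1-p" "p-1"]
        cycle_shift_eq_id[of "n-2" n] n by (simp_all add: fun_eq_iff)
    have "foldl (W_delta n) q (separating_word n p) = cycle_shift n (n-1-p) q"
      using foldl_replicate_La[of q "n-1-p"] 3 q p by (simp add: separating_word_def)
    then show ?thesis using inverse cycle_shift_from_one[OF p] by metis
  qed
qed

lemma minimal_W: "minimal_dfa {..<n} (W_delta n) 0 {1}"
  unfolding minimal_dfa_def
proof (intro conjI allI impI is_dfa_W)
  fix S \<delta> q0 F
  assume dfa: "is_dfa S \<delta> q0 F \<and> lang_of \<delta> q0 F = lang_of (W_delta n) 0 {1}"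
  have "card {..<n} \<le> card S"
  proof (rule card_le_if_pairwise_distinguishable[where word = "access_word n"])
    show "is_dfa S \<delta> q0 F" using dfa ..
    fix p p' assume pp': "p \<in> {..<n}" "p' \<in> {..<n}" "p \<noteq> p'"
    define s where "s = (if p \<noteq> n-1 then p else p')"
    have "s < n-1" "s = p \<or> s = p'" using pp' by (auto simp: s_def)
    then have "(access_word n p @ separating_word n s \<in> lang_of (W_delta n) 0 {1}) \<noteq>
        (access_word n p' @ separating_word n s \<in> lang_of (W_delta n) 0 {1})"
      using pp' foldl_access_word foldl_separating_word by (auto simp: lang_of_def)
    then show "\<exists>s. (access_word n p @ s \<in> lang_of \<delta> q0 F) \<noteq> (access_word n p' @ s \<in> lang_of \<delta> q0 F)"
      using dfa by auto
  qed
  then show "card {..<n} \<le> card S" .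
qed

end

theorem proposition2:
  fixes n :: nat
  assumes "n \<ge> 4"
  shows "minimal_dfa {..<n} (W_delta n) 0 {1}
    \<and> suffix_free (lang_of (W_delta n) 0 {1})
    \<and> gen_semigroup n (range (W_letter n)) = W_sf n
    \<and> card (W_sf n) = (n-1)^(n-2) + n - 2
    \<and> {t \<in> trQ n. t 0 = n-1 \<and> t (n-1) = n-1 \<and> (\<forall>q. 1 \<le> q \<and> q \<le> n-2 \<longrightarrow> t q \<noteq> 0)} \<subseteq> W_sf n
    \<and> card {t \<in> trQ n. t 0 = n-1 \<and> t (n-1) = n-1 \<and> (\<forall>q. 1 \<le> q \<and> q \<le> n-2 \<longrightarrow> t q \<noteq> 0)} = (n-1)^(n-2)
    \<and> {t \<in> trQ n. 1 \<le> t 0 \<and> t 0 \<le> n-2 \<and> (\<forall>q. 1 \<le> q \<and> q \<le> n-1 \<longrightarrow> t q = n-1)} \<subseteq> W_sf n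
    \<and> card {t \<in> trQ n. 1 \<le> t 0 \<and> t 0 \<le> n-2 \<and> (\<forall>q. 1 \<le> q \<and> q \<le> n-1 \<longrightarrow> t q = n-1)} = n-2"
proof -
  have n: "2 \<le> n" using assms by simp
  show ?thesis
    unfolding W_sf_a_def[symmetric] W_sf_b_def[symmetric]
    using minimal_W[OF assms] suffix_free_W[OF assms] W_semigroup_eq_W_sf[OF assms]
      card_W_sf[OF n] W_sf_eq_Un[OF n] card_W_sf_a[OF n] card_W_sf_b[OF n]
    by simp
qed

end
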